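(* Consider the non-amortized variant of the algorithmic framework described below with parameters $\gamma\in(0,1)$, $\eta=\gamma^{-1}$ and $\xi=2\gamma^{-1}$. Then the framework maintains $\ell_i\le(1+\eta)T$ for every machine $i$, where $\ell_i=\sum_{j\in \hat J_i\cup\check J_i}p_j/s_i$ is the total load of machine $i$ and $T$ is the current guess.
   Context: Problem: machines $1,\dots,m$ with speeds $s_1\ge s_2\ge\dots\ge s_m>0$; jobs arrive online, job $j$ has size $p_j>0$; the load of job $j$ on machine $i$ is $p_j/s_i$. Framework (non-amortized variant): it keeps a guess $T$ and for each machine $i$ a partition of its jobs into old jobs $\hat J_i$ and new jobs $\check J_i$. Machine $i$ is saturated if $\check\ell_i:=\sum_{j\in\check J_i}p_j/s_i\ge T$, and $\eta$-eligible for job $j$ if $p_j/s_i\le \eta T$. Let $\tilde{\mathcal M}(\eta,j)$ be the set of machines that are $\eta$-eligible for $j$ and not saturated. When the first job $j_1$ arrives, set $T=p_{j_1}/s_1$ and place $j_1$ on machine 1. When a later job $j^*$ arrives, put it into a priority queue $Q$ (larger size = higher priority) and run: while $Q$ is nonempty, remove the largest job $j'$ from $Q$; then repeat: if $\tilde{\mathcal M}(\eta,j')\ne\emptyset$, choose a slowest machine $i'$ in it, move every $j\in\hat J_{i'}$ with $p_j\ge \eta^{-1}p_{j'}$ from $\hat J_{i'}$ to $\check J_{i'}$, and if $i'$ is still not saturated stop repeating; otherwise set $T:=\xi T$ and for every machine $i$ move all jobs of $\check J_i$ to $\hat J_i$. After a machine $i'$ is found, set $\pi:=\gamma p_{j'}$;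 go through the jobs $j\in\hat J_{i'}$ in non-increasing order of size and, whenever $p_j\le\pi$, set $\pi:=\pi-p_j$ and move $j$ from $\hat J_{i'}$ into $Q$ (removing it from $i'$). Finally add $j'$ to $\check J_{i'}$ (any leftover $\pi$ is discarded). *)

theory Defs
  imports Complex_Main
begin

text \<open>Machines are 1..m with speeds s :: nat => real; jobs are of an arbitrary type 'j
  with sizes p :: 'j => real.  The framework is modelled as a nondeterministic small-step
  transition system (ties in the priority queue, among slowest machines, and among
  equal-size old jobs are resolved arbitrarily).\<close>

datatype 'j phase =
    Idle
  | Search 'j                       \<comment> \<open>job j' removed from Q, looking for a machine\<close>
  | Remove 'j nat real "'j set"     \<comment> \<open>j', chosen machine i', budget pi, old jobs not yet examined\<close>

record 'j fstate =
  thr :: real                 \<comment> \<open>the guess T\<close>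
  old :: "nat \<Rightarrow> 'j set"     \<comment> \<open>hat J_i\<close>
  new :: "nat \<Rightarrow> 'j set"     \<comment> \<open>check J_i\<close>
  queue :: "'j set"
  phase :: "'j phase"
  pending :: "'j list"
  started :: bool

definition init_state :: "'j list \<Rightarrow> 'j fstate" where
  "init_state js = \<lparr>thr = 0, old = (\<lambda>_. {}), new = (\<lambda>_. {}), queue = {}, phase = Idle,
                     pending = js, started = False\<rparr>"

definition total_load :: "(nat \<Rightarrow> real) \<Rightarrow> ('j \<Rightarrow> real) \<Rightarrow> 'j fstate \<Rightarrow> nat \<Rightarrow> real" where
  "total_load s p \<sigma> i = (\<Sum>j\<in>old \<sigma> i \<union> new \<sigma> i. p j / s i)"

definition new_load :: "(nat \<Rightarrow> real) \<Rightarrow> ('j \<Rightarrow> real) \<Rightarrow> 'j fstate \<Rightarrow> nat \<Rightarrow> real" where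
  "new_load s p \<sigma> i = (\<Sum>j\<in>new \<sigma> i. p j / s i)"

definition saturated :: "(nat \<Rightarrow> real) \<Rightarrow> ('j \<Rightarrow> real) \<Rightarrow> 'j fstate \<Rightarrow> nat \<Rightarrow> bool" where
  "saturated s p \<sigma> i \<longleftrightarrow> new_load s p \<sigma> i \<ge> thr \<sigma>"

definition eligible :: "(nat \<Rightarrow> real) \<Rightarrow> ('j \<Rightarrow> real) \<Rightarrow> real \<Rightarrow> 'j fstate \<Rightarrow> 'j \<Rightarrow> nat \<Rightarrow> bool" where
  "eligible s p \<eta> \<sigma> j i \<longleftrightarrow> p j / s i \<le> \<eta> * thr \<sigma>"

definition Mtilde :: "nat \<Rightarrow> (nat \<Rightarrow> real) \<Rightarrow> ('j \<Rightarrow> real) \<Rightarrow> real \<Rightarrow> 'j fstate \<Rightarrow> 'j \<Rightarrow> nat set" where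
  "Mtilde m s p \<eta> \<sigma> j = {i \<in> {1..m}. eligible s p \<eta> \<sigma> j i \<and> \<not> saturated s p \<sigma> i}"

inductive fstep :: "nat \<Rightarrow> (nat \<Rightarrow> real) \<Rightarrow> ('j \<Rightarrow> real) \<Rightarrow> real \<Rightarrow> real \<Rightarrow> real
                     \<Rightarrow> 'j fstate \<Rightarrow> 'j fstate \<Rightarrow> bool"
  for m s p \<gamma> \<eta> \<xi> where
  first:
    "\<lbrakk> \<not> started \<sigma>; pending \<sigma> = j # js \<rbrakk> \<Longrightarrow>
     fstep m s p \<gamma> \<eta> \<xi> \<sigma>
       (\<sigma>\<lparr>thr := p j / s 1, new := (\<lambda>_. {})(1 := {j}), old := (\<lambda>_. {}),
          pending := js, started := True\<rparr>)"
| arrive: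
    "\<lbrakk> started \<sigma>; phase \<sigma> = Idle; queue \<sigma> = {}; pending \<sigma> = j # js \<rbrakk> \<Longrightarrow>
     fstep m s p \<gamma> \<eta> \<xi> \<sigma> (\<sigma>\<lparr>queue := {j}, pending := js\<rparr>)"
| pop:
    "\<lbrakk> started \<sigma>; phase \<sigma> = Idle; j \<in> queue \<sigma>; \<forall>k\<in>queue \<sigma>. p k \<le> p j \<rbrakk> \<Longrightarrow>
     fstep m s p \<gamma> \<eta> \<xi> \<sigma> (\<sigma>\<lparr>queue := queue \<sigma> - {j}, phase := Search j\<rparr>)"
| found:
    "\<lbrakk> phase \<sigma> = Search j'; i' \<in> Mtilde m s p \<eta> \<sigma> j';
       \<forall>i\<in>Mtilde m s p \<eta> \<sigma> j'. s i' \<le> s i;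
       \<sigma>1 = \<sigma>\<lparr>old := (old \<sigma>)(i' := {j \<in> old \<sigma> i'. \<not> (p j \<ge> p j' / \<eta>)}),
                new := (new \<sigma>)(i' := new \<sigma> i' \<union> {j \<in> old \<sigma> i'. p j \<ge> p j' / \<eta>})\<rparr> \<rbrakk> \<Longrightarrow>
     fstep m s p \<gamma> \<eta> \<xi> \<sigma>
       (if \<not> saturated s p \<sigma>1 i'
        then \<sigma>1\<lparr>phase := Remove j' i' (\<gamma> * p j') (old \<sigma>1 i')\<rparr>
        else \<sigma>1)"
| raise:
    "\<lbrakk> phase \<sigma> = Search j'; Mtilde m s p \<eta> \<sigma> j' = {} \<rbrakk> \<Longrightarrow>
     fstep m s p \<gamma> \<eta> \<xi> \<sigma>
       (\<sigma>\<lparr>thr := \<xi> * thr \<sigma>, old := (\<lambda>i. old \<sigma> i \<union> new \<sigma> i), new := (\<lambda>_. {})\<rparr>)"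
| remove_take:
    "\<lbrakk> phase \<sigma> = Remove j' i' \<pi> U; j \<in> U; \<forall>k\<in>U. p k \<le> p j; p j \<le> \<pi> \<rbrakk> \<Longrightarrow>
     fstep m s p \<gamma> \<eta> \<xi> \<sigma>
       (\<sigma>\<lparr>old := (old \<sigma>)(i' := old \<sigma> i' - {j}), queue := queue \<sigma> \<union> {j},
          phase := Remove j' i' (\<pi> - p j) (U - {j})\<rparr>)"
| remove_skip:
    "\<lbrakk> phase \<sigma> = Remove j' i' \<pi> U; j \<in> U; \<forall>k\<in>U. p k \<le> p j; \<not> p j \<le> \<pi> \<rbrakk> \<Longrightarrow>
     fstep m s p \<gamma> \<eta> \<xi> \<sigma> (\<sigma>\<lparr>phase := Remove j' i' \<pi> (U - {j})\<rparr>)"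
| place:
    "\<lbrakk> phase \<sigma> = Remove j' i' \<pi> {} \<rbrakk> \<Longrightarrow>
     fstep m s p \<gamma> \<eta> \<xi> \<sigma> (\<sigma>\<lparr>new := (new \<sigma>)(i' := new \<sigma> i' \<union> {j'}), phase := Idle\<rparr>)"

end

theory Submission
  imports Defs
begin

text \<open>Every machine keeps its weighted load 2 \<cdot> (old load) + \<gamma> \<cdot> (new load) below (1 + \<gamma>) T;
  since \<gamma> \<le> 2 this bounds its total load by (1 + \<gamma>) T / \<gamma> = (1 + \<eta>) T.  Raising T to \<xi> T turns
  all load into old load, of weight at most 2 (1 + \<eta>) T = (1 + \<gamma>) \<xi> T.  Promoting old jobs to new
  ones never increases the weighted load, again because \<gamma> \<le> 2.  Placing j' on a non-saturated,
  \<eta>-eligible machine i' adds \<gamma> p j' / s i' \<le> T.  If i' has no old jobs left this is absorbed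
  because its new load is below T.  Otherwise the greedy removal skipped some job; as all old
  jobs of i' are smaller than the budget \<gamma> p j' and are scanned in non-increasing order, at least
  half the budget was removed, and this old load, counted twice, pays for j'.\<close>

lemma sum_Un_le_of_nonneg:
  fixes f :: "'a \<Rightarrow> real"
  assumes "finite A" "finite B" "\<And>x. x \<in> A \<union> B \<Longrightarrow> 0 \<le> f x"
  shows "sum f (A \<union> B) \<le> sum f A + sum f B"
proof -
  have "0 \<le> sum f (A \<inter> B)" using assms(3) by (intro sum_nonneg) auto
  then show ?thesis using sum_Un[OF assms(1,2), of f] by linarith
qed

lemma weighted_sum_move_le:
  fixes f :: "'a \<Rightarrow> real" and c :: real
  assumes "finite A" "finite N" "B \<subseteq> A" "\<And>x. x \<in> A \<union> N \<Longrightarrow> 0 \<le> f x" "0 \<le> c" "c \<le> 2"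
  shows "2 * sum f (A - B) + c * sum f (N \<union> B) \<le> 2 * sum f A + c * sum f N"
proof -
  have B: "finite B" "0 \<le> sum f B"
    using assms(1,3,4) finite_subset by (blast, intro sum_nonneg, auto)
  have "sum f (A - B) = sum f A - sum f B" using assms(1,3) by (rule sum_diff)
  moreover have "c * sum f (N \<union> B) \<le> c * (sum f N + sum f B)"
    using assms(2,3,4,5) B(1) by (intro mult_left_mono sum_Un_le_of_nonneg) auto
  moreover have "c * sum f B \<le> 2 * sum f B" using assms(6) B(2) by (rule mult_right_mono)
  ultimately show ?thesis by (simp add: distrib_left)
qed

lemma load_le_of_weighted_load:
  fixes x y T \<gamma> :: real
  assumes "0 \<le> x" "0 < \<gamma>" "\<gamma> \<le> 2" "2 * x + \<gamma> * y \<le> (1 + \<gamma>) * T"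
  shows "x + y \<le> (1 + 1 / \<gamma>) * T"
proof -
  have "\<gamma> * (x + y) \<le> 2 * x + \<gamma> * y"
    using assms(1,3) by (simp add: distrib_left mult_right_mono)
  also have "\<dots> \<le> (1 + \<gamma>) * T" by (fact assms(4))
  also have "\<dots> = \<gamma> * ((1 + 1 / \<gamma>) * T)"
    using assms(2) by (simp add: field_simps)
  finally show ?thesis using assms(2) by simp
qed

lemma weighted_load_after_placement:
  fixes x y a r T \<gamma> :: real
  assumes "0 < \<gamma>" "y < T" "\<gamma> * a \<le> T" "2 * (x + r) + \<gamma> * y \<le> (1 + \<gamma>) * T"
    and "x = 0 \<or> \<gamma> * a \<le> 2 * r"
  shows "2 * x + \<gamma> * (y + a) \<le> (1 + \<gamma>) * T"
  using assms(5)
proof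
  assume "x = 0"
  moreover have "\<gamma> * y \<le> \<gamma> * T" using assms(1,2) by simp
  ultimately show ?thesis using assms(3) by (simp add: distrib_left distrib_right)
next
  assume "\<gamma> * a \<le> 2 * r"
  then show ?thesis using assms(4) by (simp add: distrib_left)
qed

definition old_load :: "(nat \<Rightarrow> real) \<Rightarrow> ('j \<Rightarrow> real) \<Rightarrow> 'j fstate \<Rightarrow> nat \<Rightarrow> real" where
  "old_load s p \<sigma> i = (\<Sum>j\<in>old \<sigma> i. p j / s i)"

lemma old_load_phase_update [simp]: "old_load s p (\<sigma>\<lparr>phase := ph\<rparr>) = old_load s p \<sigma>"
  by (simp add: old_load_def fun_eq_iff)

lemma new_load_phase_update [simp]: "new_load s p (\<sigma>\<lparr>phase := ph\<rparr>) = new_load s p \<sigma>"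
  by (simp add: new_load_def fun_eq_iff)

locale nonamortized_framework =
  fixes m :: nat and s :: "nat \<Rightarrow> real" and p :: "'j \<Rightarrow> real"
    and \<gamma> \<eta> \<xi> :: real and J :: "'j set"
  assumes machines_nonempty: "1 \<le> m"
    and speed_pos: "\<And>i. i \<in> {1..m} \<Longrightarrow> 0 < s i"
    and finite_jobs: "finite J"
    and size_pos: "\<And>j. j \<in> J \<Longrightarrow> 0 < p j"
    and gamma_pos: "0 < \<gamma>" and gamma_less_1: "\<gamma> < 1"
    and eta_eq: "\<eta> = 1 / \<gamma>" and xi_eq: "\<xi> = 2 / \<gamma>"
begin

lemma job_load_nonneg: "j \<in> J \<Longrightarrow> i \<in> {1..m} \<Longrightarrow> 0 \<le> p j / s i"
  using size_pos speed_pos by (simp add: less_imp_le)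

definition weighted_load :: "'j fstate \<Rightarrow> nat \<Rightarrow> real" where
  "weighted_load \<sigma> i = 2 * old_load s p \<sigma> i + \<gamma> * new_load s p \<sigma> i"

text \<open>During the removal for j' on i', \<gamma> p j' - \<pi> is the size removed so far.  Either nothing
  has been examined yet, or every unexamined job is at most the removed size (the first examined
  job is always taken); once a job has been skipped, at least half the budget has been removed.\<close>

definition removal_inv :: "'j fstate \<Rightarrow> 'j \<Rightarrow> nat \<Rightarrow> real \<Rightarrow> 'j set \<Rightarrow> bool" where
  "removal_inv \<sigma> j' i' \<pi> U \<longleftrightarrow>
     i' \<in> {1..m} \<and> j' \<in> J \<and> new_load s p \<sigma> i' < thr \<sigma> \<and> eligible s p \<eta> \<sigma> j' i' \<and>
     U \<subseteq> old \<sigma> i' \<and> \<pi> \<le> \<gamma> * p j' \<and> (\<forall>k\<in>old \<sigma> i'. p k < \<gamma> * p j') \<and>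
     ((\<pi> = \<gamma> * p j' \<and> old \<sigma> i' \<subseteq> U) \<or> (\<forall>k\<in>U. p k \<le> \<gamma> * p j' - \<pi>)) \<and>
     (old \<sigma> i' - U \<noteq> {} \<longrightarrow> \<pi> \<le> \<gamma> * p j' - \<pi>) \<and>
     weighted_load \<sigma> i' + 2 * (\<gamma> * p j' - \<pi>) / s i' \<le> (1 + \<gamma>) * thr \<sigma>"

definition framework_inv :: "'j fstate \<Rightarrow> bool" where
  "framework_inv \<sigma> \<longleftrightarrow>
     (\<forall>i. old \<sigma> i \<subseteq> J \<and> new \<sigma> i \<subseteq> J) \<and> queue \<sigma> \<subseteq> J \<and> set (pending \<sigma>) \<subseteq> J \<and>
     (\<not> started \<sigma> \<longrightarrow> phase \<sigma> = Idle) \<and>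
     (\<forall>i\<in>{1..m}. weighted_load \<sigma> i \<le> (1 + \<gamma>) * thr \<sigma>) \<and>
     (case phase \<sigma> of
        Idle \<Rightarrow> True
      | Search j' \<Rightarrow> j' \<in> J
      | Remove j' i' \<pi> U \<Rightarrow> removal_inv \<sigma> j' i' \<pi> U)"

lemma framework_inv_jobs:
  assumes "framework_inv \<sigma>"
  shows "old \<sigma> i \<subseteq> J" "new \<sigma> i \<subseteq> J" "finite (old \<sigma> i)" "finite (new \<sigma> i)"
proof -
  show jobs: "old \<sigma> i \<subseteq> J" "new \<sigma> i \<subseteq> J" using assms by (simp_all add: framework_inv_def)
  show "finite (old \<sigma> i)" "finite (new \<sigma> i)" using jobs by (simp_all add: rev_finite_subset[OF finite_jobs])
qed

lemma framework_inv_weighted_load_le: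
  "framework_inv \<sigma> \<Longrightarrow> i \<in> {1..m} \<Longrightarrow> weighted_load \<sigma> i \<le> (1 + \<gamma>) * thr \<sigma>"
  by (simp add: framework_inv_def)

lemma weighted_load_phase_update [simp]: "weighted_load (\<sigma>\<lparr>phase := ph\<rparr>) = weighted_load \<sigma>"
  by (simp add: weighted_load_def fun_eq_iff)

lemma removal_inv_phase_update [simp]: "removal_inv (\<sigma>\<lparr>phase := ph\<rparr>) = removal_inv \<sigma>"
  by (simp add: removal_inv_def eligible_def fun_eq_iff)

lemma total_load_le_of_framework_inv:
  assumes inv: "framework_inv \<sigma>" and i: "i \<in> {1..m}"
  shows "total_load s p \<sigma> i \<le> (1 + \<eta>) * thr \<sigma>"
proof -
  note jobs = framework_inv_jobs[OF inv, of i]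
  have "total_load s p \<sigma> i \<le> old_load s p \<sigma> i + new_load s p \<sigma> i"
    unfolding total_load_def old_load_def new_load_def
    using jobs by (intro sum_Un_le_of_nonneg) (auto intro!: job_load_nonneg[OF _ i])
  also have "\<dots> \<le> (1 + \<eta>) * thr \<sigma>"
    unfolding eta_eq
  proof (rule load_le_of_weighted_load)
    show "0 \<le> old_load s p \<sigma> i"
      unfolding old_load_def using jobs by (intro sum_nonneg) (auto intro!: job_load_nonneg[OF _ i])
    show "2 * old_load s p \<sigma> i + \<gamma> * new_load s p \<sigma> i \<le> (1 + \<gamma>) * thr \<sigma>"
      using framework_inv_weighted_load_le[OF inv i] by (simp add: weighted_load_def)
  qed (use gamma_pos gamma_less_1 in auto)
  finally show ?thesis .
qed

lemma framework_inv_init: "set js \<subseteq> J \<Longrightarrow> framework_inv (init_state js)"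
  by (simp add: framework_inv_def init_state_def weighted_load_def old_load_def new_load_def)

lemma framework_inv_first:
  assumes inv: "framework_inv \<sigma>" and "\<not> started \<sigma>" and pending: "pending \<sigma> = j # js"
  shows "framework_inv (\<sigma>\<lparr>thr := p j / s 1, new := (\<lambda>_. {})(1 := {j}), old := (\<lambda>_. {}),
                              pending := js, started := True\<rparr>)"
proof -
  have "j \<in> J" using inv pending by (simp add: framework_inv_def)
  then have "0 \<le> p j / s 1" using machines_nonempty by (simp add: job_load_nonneg)
  then have "\<gamma> * (p j / s 1) \<le> (1 + \<gamma>) * (p j / s 1)" "0 \<le> (1 + \<gamma>) * (p j / s 1)"
    using gamma_pos by (intro mult_right_mono mult_nonneg_nonneg; simp)+
  then show ?thesis
    using inv assms(2) pending \<open>j \<in> J\<close>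
    by (simp add: framework_inv_def weighted_load_def old_load_def new_load_def)
qed

lemma framework_inv_promote:
  assumes inv: "framework_inv \<sigma>" and search: "phase \<sigma> = Search j'" and i': "i' \<in> {1..m}"
  shows "framework_inv (\<sigma>\<lparr>old := (old \<sigma>)(i' := {j \<in> old \<sigma> i'. \<not> P j}),
                              new := (new \<sigma>)(i' := new \<sigma> i' \<union> {j \<in> old \<sigma> i'. P j})\<rparr>)"
    (is "framework_inv ?\<sigma>1")
proof -
  note jobs = framework_inv_jobs[OF inv, of i']
  have "2 * (\<Sum>j\<in>old \<sigma> i' - {j \<in> old \<sigma> i'. P j}. p j / s i')
          + \<gamma> * (\<Sum>j\<in>new \<sigma> i' \<union> {j \<in> old \<sigma> i'. P j}. p j / s i')
        \<le> 2 * (\<Sum>j\<in>old \<sigma> i'. p j / s i') + \<gamma> * (\<Sum>j\<in>new \<sigma> i'. p j / s i')"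
    using jobs gamma_pos gamma_less_1
    by (intro weighted_sum_move_le) (auto intro!: job_load_nonneg[OF _ i'])
  moreover have "old \<sigma> i' - {j \<in> old \<sigma> i'. P j} = {j \<in> old \<sigma> i'. \<not> P j}" by blast
  ultimately have "weighted_load ?\<sigma>1 i' \<le> weighted_load \<sigma> i'"
    by (simp add: weighted_load_def old_load_def new_load_def)
  moreover have "weighted_load ?\<sigma>1 i = weighted_load \<sigma> i" if "i \<noteq> i'" for i
    using that by (simp add: weighted_load_def old_load_def new_load_def)
  ultimately have le: "weighted_load ?\<sigma>1 i \<le> weighted_load \<sigma> i" for i
    by (cases "i = i'") auto
  have "weighted_load ?\<sigma>1 i \<le> (1 + \<gamma>) * thr ?\<sigma>1" if "i \<in> {1..m}" for i
    using order_trans[OF le framework_inv_weighted_load_le[OF inv that]] by simp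
  then show ?thesis
    using inv search unfolding framework_inv_def by auto
qed

lemma framework_inv_start_removal:
  assumes inv: "framework_inv \<sigma>" and search: "phase \<sigma> = Search j'" and i': "i' \<in> {1..m}"
    and "\<not> saturated s p \<sigma> i'" and "eligible s p \<eta> \<sigma> j' i'"
    and "\<forall>k\<in>old \<sigma> i'. p k < \<gamma> * p j'"
  shows "framework_inv (\<sigma>\<lparr>phase := Remove j' i' (\<gamma> * p j') (old \<sigma> i')\<rparr>)"
proof -
  have "removal_inv \<sigma> j' i' (\<gamma> * p j') (old \<sigma> i')"
    using assms by (simp add: removal_inv_def framework_inv_def saturated_def)
  then show ?thesis using inv search by (simp add: framework_inv_def)
qed

lemma framework_inv_found:
  assumes inv: "framework_inv \<sigma>" and search: "phase \<sigma> = Search j'"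
    and i': "i' \<in> Mtilde m s p \<eta> \<sigma> j'"
    and \<sigma>1: "\<sigma>1 = \<sigma>\<lparr>old := (old \<sigma>)(i' := {j \<in> old \<sigma> i'. \<not> p j' / \<eta> \<le> p j}),
                       new := (new \<sigma>)(i' := new \<sigma> i' \<union> {j \<in> old \<sigma> i'. p j' / \<eta> \<le> p j})\<rparr>"
  shows "framework_inv (if \<not> saturated s p \<sigma>1 i'
                        then \<sigma>1\<lparr>phase := Remove j' i' (\<gamma> * p j') (old \<sigma>1 i')\<rparr> else \<sigma>1)"
proof -
  have i'_range: "i' \<in> {1..m}" and "eligible s p \<eta> \<sigma>1 j' i'"
    using i' \<sigma>1 by (simp_all add: Mtilde_def eligible_def)
  have inv1: "framework_inv \<sigma>1"
    unfolding \<sigma>1 using inv search i'_range by (rule framework_inv_promote)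
  have "p j' / \<eta> = \<gamma> * p j'" using eta_eq gamma_pos by simp
  then have "\<forall>k\<in>old \<sigma>1 i'. p k < \<gamma> * p j'" using \<sigma>1 by auto
  then show ?thesis
    using framework_inv_start_removal[OF inv1 _ i'_range] \<open>eligible s p \<eta> \<sigma>1 j' i'\<close> inv1 \<sigma>1 search
    by simp
qed

lemma framework_inv_raise:
  assumes inv: "framework_inv \<sigma>" and search: "phase \<sigma> = Search j'"
  shows "framework_inv (\<sigma>\<lparr>thr := \<xi> * thr \<sigma>, old := (\<lambda>i. old \<sigma> i \<union> new \<sigma> i), new := (\<lambda>_. {})\<rparr>)"
    (is "framework_inv ?\<sigma>'")
proof -
  have "weighted_load ?\<sigma>' i \<le> (1 + \<gamma>) * thr ?\<sigma>'" if i: "i \<in> {1..m}" for i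
  proof -
    have "weighted_load ?\<sigma>' i = 2 * total_load s p \<sigma> i"
      by (simp add: weighted_load_def old_load_def new_load_def total_load_def)
    also have "\<dots> \<le> 2 * ((1 + \<eta>) * thr \<sigma>)"
      using total_load_le_of_framework_inv[OF inv i] by simp
    also have "\<dots> = (1 + \<gamma>) * thr ?\<sigma>'"
      using gamma_pos by (simp add: eta_eq xi_eq field_simps)
    finally show ?thesis .
  qed
  then show ?thesis using inv search by (simp add: framework_inv_def)
qed

lemma framework_inv_remove_take:
  assumes inv: "framework_inv \<sigma>" and removing: "phase \<sigma> = Remove j' i' \<pi> U"
    and j: "j \<in> U" and largest: "\<forall>k\<in>U. p k \<le> p j" and fits: "p j \<le> \<pi>"
  shows "framework_inv (\<sigma>\<lparr>old := (old \<sigma>)(i' := old \<sigma> i' - {j}), queue := queue \<sigma> \<union> {j},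
                              phase := Remove j' i' (\<pi> - p j) (U - {j})\<rparr>)"
    (is "framework_inv ?\<sigma>'")
proof -
  have ri: "removal_inv \<sigma> j' i' \<pi> U" using inv removing by (simp add: framework_inv_def)
  then have i': "i' \<in> {1..m}" and j_old: "j \<in> old \<sigma> i'" using j by (auto simp: removal_inv_def)
  have j_J: "j \<in> J" and fin: "finite (old \<sigma> i')"
    using framework_inv_jobs[OF inv] j_old by auto
  have pj: "0 < p j" "0 \<le> p j / s i'" using j_J i' by (simp_all add: size_pos job_load_nonneg)
  have removed: "(\<Sum>k\<in>old \<sigma> i' - {j}. p k / s i') = (\<Sum>k\<in>old \<sigma> i'. p k / s i') - p j / s i'"
    using fin j_old by (simp add: sum_diff1)
  then have moved: "weighted_load ?\<sigma>' i' + 2 * (\<gamma> * p j' - (\<pi> - p j)) / s i'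
                    = weighted_load \<sigma> i' + 2 * (\<gamma> * p j' - \<pi>) / s i'"
    by (simp add: weighted_load_def old_load_def new_load_def diff_divide_distrib add_divide_distrib)
  have le: "weighted_load ?\<sigma>' i \<le> weighted_load \<sigma> i" for i
    using removed pj
    by (cases "i = i'") (simp_all add: weighted_load_def new_load_def old_load_def)
  have "weighted_load ?\<sigma>' i \<le> (1 + \<gamma>) * thr ?\<sigma>'" if "i \<in> {1..m}" for i
    using order_trans[OF le framework_inv_weighted_load_le[OF inv that]] by simp
  moreover have "removal_inv ?\<sigma>' j' i' (\<pi> - p j) (U - {j})"
    using ri moved largest pj(1)
    by (auto simp: removal_inv_def new_load_def eligible_def)
  ultimately show ?thesis
    using inv removing j_J unfolding framework_inv_def by auto
qed

lemma framework_inv_remove_skip: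
  assumes inv: "framework_inv \<sigma>" and removing: "phase \<sigma> = Remove j' i' \<pi> U"
    and j: "j \<in> U" and largest: "\<forall>k\<in>U. p k \<le> p j" and too_large: "\<not> p j \<le> \<pi>"
  shows "framework_inv (\<sigma>\<lparr>phase := Remove j' i' \<pi> (U - {j})\<rparr>)"
proof -
  have ri: "removal_inv \<sigma> j' i' \<pi> U" using inv removing by (simp add: framework_inv_def)
  then have "p j < \<gamma> * p j'" using j by (auto simp: removal_inv_def)
  then have bounded: "\<forall>k\<in>U. p k \<le> \<gamma> * p j' - \<pi>"
    using ri too_large by (auto simp: removal_inv_def)
  then have "\<pi> \<le> \<gamma> * p j' - \<pi>" using j too_large by fastforce
  then have "removal_inv \<sigma> j' i' \<pi> (U - {j})"
    using ri bounded by (auto simp: removal_inv_def)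
  then show ?thesis using inv removing by (simp add: framework_inv_def)
qed

lemma framework_inv_place:
  assumes inv: "framework_inv \<sigma>" and removing: "phase \<sigma> = Remove j' i' \<pi> {}"
  shows "framework_inv (\<sigma>\<lparr>new := (new \<sigma>)(i' := new \<sigma> i' \<union> {j'}), phase := Idle\<rparr>)"
    (is "framework_inv ?\<sigma>'")
proof -
  have ri: "removal_inv \<sigma> j' i' \<pi> {}" using inv removing by (simp add: framework_inv_def)
  then have i': "i' \<in> {1..m}" and j': "j' \<in> J" by (simp_all add: removal_inv_def)
  define a where "a = p j' / s i'"
  define r where "r = (\<gamma> * p j' - \<pi>) / s i'"
  have "(\<Sum>k\<in>new \<sigma> i' \<union> {j'}. p k / s i') \<le> (\<Sum>k\<in>new \<sigma> i'. p k / s i') + (\<Sum>k\<in>{j'}. p k / s i')"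
    using framework_inv_jobs[OF inv] j' by (intro sum_Un_le_of_nonneg) (auto intro!: job_load_nonneg[OF _ i'])
  then have "new_load s p ?\<sigma>' i' \<le> new_load s p \<sigma> i' + a"
    by (simp add: new_load_def a_def)
  then have "weighted_load ?\<sigma>' i' \<le> 2 * old_load s p \<sigma> i' + \<gamma> * (new_load s p \<sigma> i' + a)"
    using gamma_pos by (simp add: weighted_load_def old_load_def)
  also have "\<dots> \<le> (1 + \<gamma>) * thr ?\<sigma>'"
  proof (simp, rule weighted_load_after_placement)
    have "a \<le> \<eta> * thr \<sigma>" using ri by (simp add: removal_inv_def eligible_def a_def)
    then have "\<gamma> * a \<le> \<gamma> * (\<eta> * thr \<sigma>)" using gamma_pos by simp
    then show "\<gamma> * a \<le> thr \<sigma>" using gamma_pos by (simp add: eta_eq)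
    show "old_load s p \<sigma> i' = 0 \<or> \<gamma> * a \<le> 2 * r"
    proof (cases "old \<sigma> i' = {}")
      case False
      then have "\<gamma> * p j' \<le> 2 * (\<gamma> * p j' - \<pi>)" using ri by (simp add: removal_inv_def)
      then show ?thesis using speed_pos[OF i'] by (simp add: a_def r_def divide_right_mono)
    qed (simp add: old_load_def)
    show "2 * (old_load s p \<sigma> i' + r) + \<gamma> * new_load s p \<sigma> i' \<le> (1 + \<gamma>) * thr \<sigma>"
      using ri by (simp add: removal_inv_def weighted_load_def r_def)
  qed (use gamma_pos ri in \<open>simp_all add: removal_inv_def\<close>)
  finally have placed: "weighted_load ?\<sigma>' i' \<le> (1 + \<gamma>) * thr ?\<sigma>'" .
  have "weighted_load ?\<sigma>' i \<le> (1 + \<gamma>) * thr ?\<sigma>'" if "i \<in> {1..m}" for i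
    using placed framework_inv_weighted_load_le[OF inv that]
    by (cases "i = i'") (simp_all add: weighted_load_def old_load_def new_load_def)
  then show ?thesis using inv j' unfolding framework_inv_def by auto
qed

lemma fstep_preserves_framework_inv:
  assumes "fstep m s p \<gamma> \<eta> \<xi> \<sigma> \<sigma>'" and inv: "framework_inv \<sigma>"
  shows "framework_inv \<sigma>'"
  using assms(1)
proof cases
  case (first j js)
  then show ?thesis using framework_inv_first[OF inv] by blast
next
  case (arrive j js)
  then show ?thesis using inv by (simp add: framework_inv_def weighted_load_def old_load_def new_load_def)
next
  case (pop j)
  then show ?thesis using inv by (auto simp: framework_inv_def weighted_load_def old_load_def new_load_def)
next
  case (found j' i' \<sigma>1)
  then show ?thesis using framework_inv_found[OF inv] by simp
next
  case (raise j')
  then show ?thesis using framework_inv_raise[OF inv] by simp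
next
  case (remove_take j' i' \<pi> U j)
  then show ?thesis using framework_inv_remove_take[OF inv] by simp
next
  case (remove_skip j' i' \<pi> U j)
  then show ?thesis using framework_inv_remove_skip[OF inv] by simp
next
  case (place j' i' \<pi>)
  then show ?thesis using framework_inv_place[OF inv] by simp
qed

lemma reachable_framework_inv:
  assumes "(fstep m s p \<gamma> \<eta> \<xi>)\<^sup>*\<^sup>* (init_state js) \<sigma>" and "set js \<subseteq> J"
  shows "framework_inv \<sigma>"
  using assms(1)
proof induction
  case base
  then show ?case using assms(2) by (rule framework_inv_init)
next
  case (step \<sigma>' \<sigma>'')
  then show ?case using fstep_preserves_framework_inv by blast
qed

end

theorem lemma6:
  fixes m :: nat and s :: "nat \<Rightarrow> real" and p :: "'j \<Rightarrow> real" and js :: "'j list"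
    and \<gamma> \<eta> \<xi> :: real and \<sigma> :: "'j fstate" and i :: nat
  assumes "m \<ge> 1"
    and "\<forall>i\<in>{1..m}. s i > 0"
    and "\<forall>i k. 1 \<le> i \<and> i \<le> k \<and> k \<le> m \<longrightarrow> s k \<le> s i"
    and "distinct js"
    and "\<forall>j\<in>set js. p j > 0"
    and "0 < \<gamma>" and "\<gamma> < 1"
    and "\<eta> = 1 / \<gamma>" and "\<xi> = 2 / \<gamma>"
    and "(fstep m s p \<gamma> \<eta> \<xi>)\<^sup>*\<^sup>* (init_state js) \<sigma>"
    and "i \<in> {1..m}"
  shows "total_load s p \<sigma> i \<le> (1 + \<eta>) * thr \<sigma>"
proof -
  interpret nonamortized_framework m s p \<gamma> \<eta> \<xi> "set js"
    using assms(1,2,5-9) by unfold_locales auto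
  show ?thesis
    using assms(10,11) by (intro total_load_le_of_framework_inv reachable_framework_inv) auto
qed

end
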